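(* Let $Y_1,Y_2\subsetneq\mathbb{C}$ and $\Omega\subset\mathbb{C}$ be domains. Suppose that for every point $b\in Y_2$ there exist a point $a\in Y_1$ and a holomorphic covering map $g_b:Y_1\setminus\{a\}\to Y_2\setminus\{b\}$ which extends to a holomorphic function $g_b:Y_1\to Y_2$ with $g_b(a)=b$ and $g_b'(a)\neq0$. Then for every $b\in Y_2$ and every $a\in Y_1$ for which such a map $g_b$ exists, $$\mathscr{C}_{\Omega}^{Y_1,a}(w)\leq \mathscr{C}_{\Omega}^{Y_2,b}(w)\quad\text{for all } w\in\Omega.$$
   Context: $\mathbb{D}=\{z\in\mathbb{C}:|z|<1\}$. For domains $\Omega\subset\mathbb{C}$, $Y\subsetneq\mathbb{C}$, and points $w\in\Omega$, $s\in Y$, let $\mathcal{H}^s_w(\Omega,Y)$ be the set of holomorphic maps $h:\Omega\to Y$ with $h(w)=s$ and $h(z)\neq s$ for all $z\in\Omega\setminus\{w\}$. For a domain $Y\subsetneq\mathbb{C}$ and $v\in Y$, the Hurwitz density is $\eta_Y(v)=2/r_Y(v)$, where $r_Y(v)=\max\{h'(0): h:\mathbb{D}\to Y \text{ holomorphic},\ h(0)=v,\ h(z)\neq v \text{ for } z\in\mathbb{D}\setminus\{0\},\ h'(0)>0\}$. The Carathéodory density of the Hurwitz metric of $\Omega$ relative to $Y$ is $\mathscr{C}_{\Omega}^{Y,s}(w)=\sup\{\eta_Y(h(w))|h'(w)| : h\in\mathcal{H}^s_w(\Omega,Y)\}$, defined to be $0$ if $\mathcal{H}^s_w(\Omega,Y)=\emptyset$.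 *)

theory Defs
  imports "HOL-Complex_Analysis.Complex_Analysis"
begin

definition domain :: "complex set \<Rightarrow> bool" where
  "domain S \<longleftrightarrow> open S \<and> connected S \<and> S \<noteq> {}"

definition hurwitz_maps :: "complex set \<Rightarrow> complex set \<Rightarrow> complex \<Rightarrow> complex \<Rightarrow> (complex \<Rightarrow> complex) set" where
  "hurwitz_maps \<Omega> Y w s =
     {h. h holomorphic_on \<Omega> \<and> h ` \<Omega> \<subseteq> Y \<and> h w = s \<and> (\<forall>z\<in>\<Omega> - {w}. h z \<noteq> s)}"

text \<open>r_Y(v): the maximum of h'(0) over such maps from the unit disc (taken as a supremum).\<close>
definition hurwitz_radius :: "complex set \<Rightarrow> complex \<Rightarrow> real" where
  "hurwitz_radius Y v =
     Sup {Re (deriv h 0) | h. h \<in> hurwitz_maps (ball 0 1) Y 0 v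
                           \<and> Im (deriv h 0) = 0 \<and> Re (deriv h 0) > 0}"

definition hurwitz_density :: "complex set \<Rightarrow> complex \<Rightarrow> real" where
  "hurwitz_density Y v = 2 / hurwitz_radius Y v"

definition cara_hurwitz :: "complex set \<Rightarrow> complex set \<Rightarrow> complex \<Rightarrow> complex \<Rightarrow> ereal" where
  "cara_hurwitz \<Omega> Y s w =
     (if hurwitz_maps \<Omega> Y w s = {} then 0
      else (SUP h\<in>hurwitz_maps \<Omega> Y w s. ereal (hurwitz_density Y (h w) * cmod (deriv h w))))"

end

theory Submission
  imports Defs
begin

text \<open>Post-composition with \<open>g\<close> maps \<open>H^a_w(\<Omega>, Y1)\<close> into \<open>H^b_w(\<Omega>, Y2)\<close> and multiplies
  derivatives at \<open>w\<close> by \<open>g'(a)\<close>, so it suffices to show \<open>r_Y2(b) \<le> |g'(a)| r_Y1(a)\<close>.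
  For this, every \<open>k \<in> H^b_0(\<bbbD>, Y2)\<close> lifts through \<open>g\<close> to some \<open>h \<in> H^a_0(\<bbbD>, Y1)\<close>:
  on the punctured disc \<open>k\<close> lifts through the covering \<open>Y1 - {a} \<rightarrow> Y2 - {b}\<close> because near \<open>0\<close>
  the local inverse of \<open>g\<close> at \<open>a\<close> is a single-valued lift, so the monodromy around \<open>0\<close> is
  trivial; the lift extends holomorphically by \<open>a\<close> at \<open>0\<close>. Then \<open>k'(0) = g'(a) h'(0)\<close>, and a
  rotation makes \<open>h'(0)\<close> positive. The radii are finite by Landau's theorem, as \<open>Y1 \<noteq> \<complex>\<close>.\<close>

lemma Landau_deriv_bound:
  fixes c :: complex
  obtains M where "\<And>f. \<lbrakk>f holomorphic_on ball 0 1; f 0 = c; \<And>z. z \<in> ball 0 1 \<Longrightarrow> f z \<noteq> 0 \<and> f z \<noteq> 1\<rbrakk>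
                     \<Longrightarrow> norm (deriv f 0) \<le> M"
proof -
  obtain R where Rpos: "\<And>z. 0 < R z"
    and Landau: "\<And>f. \<lbrakk>f holomorphic_on cball 0 (R (f 0));
                      \<And>z. norm z \<le> R (f 0) \<Longrightarrow> f z \<noteq> 0 \<and> f z \<noteq> 1\<rbrakk> \<Longrightarrow> norm (deriv f 0) < 1"
    using Landau_Picard by metis
  define s where "s = complex_of_real (1 / (2 * R c))"
  have s_in_ball: "s * z \<in> ball 0 1" if "norm z \<le> R c" for z
  proof -
    have "norm (s * z) = norm z / (2 * R c)" using Rpos[of c] by (simp add: s_def norm_divide)
    also have "\<dots> < 1" using that Rpos[of c] by (simp add: field_simps)
    finally show ?thesis by simp
  qed
  show ?thesis
  proof (rule that)
    fix f assume holf: "f holomorphic_on ball 0 1" and f0: "f 0 = c"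
      and omit: "\<And>z. z \<in> ball 0 1 \<Longrightarrow> f z \<noteq> 0 \<and> f z \<noteq> 1"
    have "norm (deriv (\<lambda>z. f (s * z)) 0) < 1"
    proof (rule Landau)
      show "(\<lambda>z. f (s * z)) holomorphic_on cball 0 (R (f (s * 0)))"
        using f0 s_in_ball
        by (intro holomorphic_on_compose_gen[OF _ holf, unfolded o_def] holomorphic_intros) auto
    qed (use f0 s_in_ball omit in auto)
    moreover have "deriv (\<lambda>z. f (s * z)) 0 = s * deriv f 0"
      using holf by (simp add: deriv_compose_linear holomorphic_on_imp_differentiable_at)
    ultimately have "norm (deriv f 0) / (2 * R c) < 1"
      using Rpos[of c] by (simp add: s_def norm_divide)
    then show "norm (deriv f 0) \<le> 2 * R c"
      using Rpos[of c] by (simp add: field_simps)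
  qed
qed

lemma hurwitz_map_eq_exp:
  assumes h: "h \<in> hurwitz_maps (ball 0 1) Y 0 v" and p: "p \<notin> Y"
  obtains L where "L holomorphic_on ball 0 1" "L 0 = 0"
    "\<And>z. z \<in> ball 0 1 \<Longrightarrow> h z = p - (p - v) * exp (L z)"
    "\<And>z. z \<in> ball 0 1 \<Longrightarrow> exp (L z) = 1 \<Longrightarrow> z = 0"
proof -
  from h have holh: "h holomorphic_on ball 0 1" and him: "h ` ball 0 1 \<subseteq> Y"
    and h0: "h 0 = v" and hne: "\<And>z. z \<in> ball 0 1 \<Longrightarrow> z \<noteq> 0 \<Longrightarrow> h z \<noteq> v"
    by (auto simp: hurwitz_maps_def)
  have pv: "p \<noteq> v" using him h0 p by force
  define F where "F z = (p - h z) / (p - v)" for z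
  have holF: "F holomorphic_on ball 0 1" unfolding F_def using holh pv by (auto intro!: holomorphic_intros)
  have F_nz: "F z \<noteq> 0" if "z \<in> ball 0 1" for z
    using that him p pv by (force simp: F_def)
  obtain Lg where holLg: "Lg holomorphic_on ball 0 1"
    and expLg: "\<And>z. z \<in> ball 0 1 \<Longrightarrow> exp (Lg z) = F z"
    using holomorphic_logarithm_exists[OF convex_ball open_ball holF F_nz, of 0] by auto
  have F0: "F 0 = 1" using pv h0 by (simp add: F_def)
  have expL: "exp (Lg z - Lg 0) = F z" if "z \<in> ball 0 1" for z
    using expLg[OF that] expLg[of 0] F0 by (simp add: exp_diff)
  show ?thesis
  proof (rule that[of "\<lambda>z. Lg z - Lg 0"])
    show "(\<lambda>z. Lg z - Lg 0) holomorphic_on ball 0 1" by (intro holomorphic_intros holLg)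
    fix z :: complex assume z: "z \<in> ball 0 1"
    show "h z = p - (p - v) * exp (Lg z - Lg 0)" using expL[OF z] pv by (simp add: F_def field_simps)
    show "z = 0" if "exp (Lg z - Lg 0) = 1"
      using that expL[OF z] hne[OF z] pv by (auto simp: F_def field_simps)
  qed simp
qed

lemma hurwitz_maps_deriv_bounded:
  assumes "Y \<noteq> UNIV"
  obtains M where "\<And>h. h \<in> hurwitz_maps (ball 0 1) Y 0 v \<Longrightarrow> norm (deriv h 0) \<le> M"
proof -
  obtain p where p: "p \<notin> Y" using assms by blast
  obtain M where M: "\<And>f. \<lbrakk>f holomorphic_on ball 0 1; f 0 = -1; \<And>z. z \<in> ball 0 1 \<Longrightarrow> f z \<noteq> 0 \<and> f z \<noteq> 1\<rbrakk>
                           \<Longrightarrow> norm (deriv f 0) \<le> M"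
    using Landau_deriv_bound by blast
  show ?thesis
  proof (rule that)
    fix h assume h: "h \<in> hurwitz_maps (ball 0 1) Y 0 v"
    then obtain L where holL: "L holomorphic_on ball 0 1" and L0: "L 0 = 0"
      and hL: "\<And>z. z \<in> ball 0 1 \<Longrightarrow> h z = p - (p - v) * exp (L z)"
      and expL: "\<And>z. z \<in> ball 0 1 \<Longrightarrow> exp (L z) = 1 \<Longrightarrow> z = 0"
      using hurwitz_map_eq_exp p by metis
    define T where "T = 2 * of_real pi * \<i>"
    have T: "T \<noteq> 0" by (simp add: T_def)
    \<comment> \<open>\<open>L / T - 1\<close> omits \<open>0\<close> and \<open>1\<close> because \<open>L\<close> omits \<open>T\<close> and \<open>2 * T\<close>.\<close>
    have bound: "norm (deriv (\<lambda>z. L z / T - 1) 0) \<le> M"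
    proof (rule M)
      show "(\<lambda>z. L z / T - 1) holomorphic_on ball 0 1" by (intro holomorphic_intros holL) (simp add: T)
      fix z :: complex assume z: "z \<in> ball 0 1"
      have "exp T = 1" "exp (2 * T) = 1" by (simp_all add: T_def exp_eq_1)
      then show "L z / T - 1 \<noteq> 0 \<and> L z / T - 1 \<noteq> 1"
        using expL[OF z] L0 T by (auto simp: field_simps)
    qed (simp add: L0)
    have dL: "(L has_field_derivative deriv L 0) (at 0)"
      using holL by (intro holomorphic_derivI[of L "ball 0 1"]) auto
    have dphi: "deriv (\<lambda>z. L z / T - 1) 0 = deriv L 0 / T"
      by (rule DERIV_imp_deriv) (use dL T in \<open>auto intro!: derivative_eq_intros\<close>)
    have dh: "deriv h 0 = - ((p - v) * deriv L 0)"
    proof (rule DERIV_imp_deriv)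
      have "((\<lambda>z. p - (p - v) * exp (L z)) has_field_derivative - ((p - v) * deriv L 0)) (at 0)"
        using dL L0 by (auto intro!: derivative_eq_intros)
      then show "(h has_field_derivative - ((p - v) * deriv L 0)) (at 0)"
        by (rule has_field_derivative_transform_within_open[of _ _ _ "ball 0 1"]) (use hL in auto)
    qed
    have "norm (deriv L 0) \<le> 2 * pi * M"
      using bound unfolding dphi by (simp add: T_def norm_mult norm_divide field_simps)
    then show "norm (deriv h 0) \<le> norm (p - v) * (2 * pi * M)"
      by (simp add: dh norm_mult mult_left_mono)
  qed
qed

definition hurwitz_derivs :: "complex set \<Rightarrow> complex \<Rightarrow> real set" where
  "hurwitz_derivs Y v = {Re (deriv h 0) | h. h \<in> hurwitz_maps (ball 0 1) Y 0 v
                                         \<and> Im (deriv h 0) = 0 \<and> Re (deriv h 0) > 0}"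

lemma hurwitz_radius_eq_Sup: "hurwitz_radius Y v = Sup (hurwitz_derivs Y v)"
  by (simp add: hurwitz_radius_def hurwitz_derivs_def)

lemma hurwitz_derivsI:
  assumes "h \<in> hurwitz_maps (ball 0 1) Y 0 v" "deriv h 0 = of_real x" "x > 0"
  shows "x \<in> hurwitz_derivs Y v"
  using assms unfolding hurwitz_derivs_def by force

lemma hurwitz_derivsE:
  assumes "x \<in> hurwitz_derivs Y v"
  obtains h where "h \<in> hurwitz_maps (ball 0 1) Y 0 v" "deriv h 0 = of_real x" "x > 0"
  using assms unfolding hurwitz_derivs_def by (force simp: complex_eq_iff)

lemma bdd_above_hurwitz_derivs:
  assumes "Y \<noteq> UNIV"
  shows "bdd_above (hurwitz_derivs Y v)"
proof -
  obtain M where "\<And>h. h \<in> hurwitz_maps (ball 0 1) Y 0 v \<Longrightarrow> norm (deriv h 0) \<le> M"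
    using hurwitz_maps_deriv_bounded[OF assms] by blast
  then show ?thesis
    by (intro bdd_aboveI[of _ M]) (force elim: hurwitz_derivsE)
qed

lemma hurwitz_derivs_ex_pos:
  assumes "open Y" "v \<in> Y"
  obtains e where "e > 0" "e \<in> hurwitz_derivs Y v"
proof -
  obtain e where e: "e > 0" "ball v e \<subseteq> Y" using assms openE by blast
  have "v + of_real (e/2) * z \<in> Y" if "z \<in> ball 0 1" for z
    using that e by (intro subsetD[OF e(2)]) (simp add: dist_norm norm_mult)
  then have "(\<lambda>z. v + of_real (e/2) * z) \<in> hurwitz_maps (ball 0 1) Y 0 v"
    unfolding hurwitz_maps_def using e by (auto intro!: holomorphic_intros)
  moreover have "deriv (\<lambda>z. v + of_real (e/2) * z) 0 = of_real (e/2)"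
    by (rule DERIV_imp_deriv) (auto intro!: derivative_eq_intros)
  ultimately show ?thesis
    using e by (intro that[of "e/2"] hurwitz_derivsI) auto
qed

lemma hurwitz_radius_pos:
  assumes "open Y" "Y \<noteq> UNIV" "v \<in> Y"
  shows "0 < hurwitz_radius Y v"
proof -
  obtain e where "e > 0" "e \<in> hurwitz_derivs Y v"
    using hurwitz_derivs_ex_pos[OF assms(1,3)] by blast
  then show ?thesis
    unfolding hurwitz_radius_eq_Sup
    using cSup_upper[OF _ bdd_above_hurwitz_derivs[OF assms(2)]] by force
qed

lemma hurwitz_maps_rotate:
  assumes h: "h \<in> hurwitz_maps (ball 0 1) Y 0 v" and u: "norm u = 1"
  shows "(\<lambda>z. h (u * z)) \<in> hurwitz_maps (ball 0 1) Y 0 v"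
    and "deriv (\<lambda>z. h (u * z)) 0 = u * deriv h 0"
proof -
  from h have holh: "h holomorphic_on ball 0 1"
    by (simp add: hurwitz_maps_def)
  have "u * z \<in> ball 0 1 \<longleftrightarrow> z \<in> ball 0 1" for z
    using u by (simp add: norm_mult)
  moreover have "u \<noteq> 0" using u by auto
  ultimately show "(\<lambda>z. h (u * z)) \<in> hurwitz_maps (ball 0 1) Y 0 v"
    using h unfolding hurwitz_maps_def
    by (auto intro!: holomorphic_on_compose_gen[OF _ holh, unfolded o_def] holomorphic_intros)
  show "deriv (\<lambda>z. h (u * z)) 0 = u * deriv h 0"
    using holh by (simp add: deriv_compose_linear holomorphic_on_imp_differentiable_at)
qed

lemma holomorphic_local_inverse:
  assumes holf: "f holomorphic_on S" and "a \<in> S" "open S" "deriv f a \<noteq> 0"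
  obtains V g where "open V" "f a \<in> V" "g holomorphic_on V" "g (f a) = a"
    "\<And>y. y \<in> V \<Longrightarrow> g y \<in> S \<and> f (g y) = y"
proof -
  obtain r where r: "r > 0" "ball a r \<subseteq> S" "inj_on f (ball a r)"
    using has_complex_derivative_locally_injective[OF assms] by blast
  have holf': "f holomorphic_on ball a r"
    using holomorphic_on_subset[OF holf r(2)] .
  obtain g where "g holomorphic_on f ` ball a r" "\<And>z. z \<in> ball a r \<Longrightarrow> g (f z) = z"
    using holomorphic_has_inverse[OF holf' open_ball r(3)] by metis
  moreover have "open (f ` ball a r)"
    using open_mapping_thm3[OF holf' open_ball r(3)] .
  ultimately show ?thesis
    using r by (intro that[of "f ` ball a r" g]) auto
qed

lemma vimage_exp_punctured_ball:
  assumes "r > 0"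
  shows "exp -` (ball 0 r - {0}) = {z. Re z < ln r}"
  using assms by (auto simp: norm_exp_eq_Re ln_less_cancel_iff[symmetric] simp del: ln_less_cancel_iff)

lemma continuous_on_comp_Ln_if_exp_invariant:
  fixes G :: "complex \<Rightarrow> 'a::topological_space"
  assumes S: "open S" "0 \<notin> S" and contG: "continuous_on (exp -` S) G"
    and inv: "\<And>u v. u \<in> exp -` S \<Longrightarrow> v \<in> exp -` S \<Longrightarrow> exp u = exp v \<Longrightarrow> G u = G v"
  shows "continuous_on S (\<lambda>z. G (Ln z))"
proof -
  have S_eq: "S = (S - \<real>\<^sub>\<le>\<^sub>0) \<union> (S - \<real>\<^sub>\<ge>\<^sub>0)"
    using S(2) by (auto simp: complex_nonpos_Reals_iff complex_nonneg_Reals_iff)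
                  (metis complex_eqI zero_complex.sel)
  have Ln_in: "Ln z \<in> exp -` S" if "z \<in> S" for z
    using that S(2) by (metis exp_Ln vimageI)
  have cont1: "continuous_on (S - \<real>\<^sub>\<le>\<^sub>0) (\<lambda>z. G (Ln z))"
    by (rule continuous_on_compose2[OF contG continuous_on_Ln]) (use Ln_in in auto)
  have cont2: "continuous_on (S - \<real>\<^sub>\<ge>\<^sub>0) (\<lambda>z. G (Ln z))"
  proof (rule continuous_on_eq)
    \<comment> \<open>Off the nonnegative reals, \<open>Ln (- z) + \<pi>\<i>\<close> is another continuous logarithm of \<open>z\<close>.\<close>
    have neg: "- z \<notin> \<real>\<^sub>\<le>\<^sub>0" if "z \<in> S - \<real>\<^sub>\<ge>\<^sub>0" for z
      using that by simp
    have exp_branch: "exp (Ln (- z) + of_real pi * \<i>) = z" if "z \<in> S - \<real>\<^sub>\<ge>\<^sub>0" for z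
      using that S(2) by (cases "z = 0") (auto simp: exp_add)
    show "continuous_on (S - \<real>\<^sub>\<ge>\<^sub>0) (\<lambda>z. G (Ln (- z) + of_real pi * \<i>))"
      by (rule continuous_on_compose2[OF contG]) (use neg exp_branch in \<open>auto intro!: continuous_intros\<close>)
    show "G (Ln (- z) + of_real pi * \<i>) = G (Ln z)" if "z \<in> S - \<real>\<^sub>\<ge>\<^sub>0" for z
    proof (rule inv)
      have "z \<noteq> 0" using that S(2) by blast
      then show "exp (Ln (- z) + of_real pi * \<i>) = exp (Ln z)" using exp_branch[OF that] by simp
    qed (use exp_branch[OF that] that Ln_in in auto)
  qed
  have "open (S - \<real>\<^sub>\<le>\<^sub>0)" "open (S - \<real>\<^sub>\<ge>\<^sub>0)"
    using S(1) by (auto intro!: open_Diff closed_nonpos_Reals_complex closed_nonneg_Reals_complex)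
  from continuous_on_open_Un[OF this cont1 cont2] show ?thesis
    by (subst S_eq)
qed

lemma covering_space_lift_exp_left_halfplane:
  fixes p f \<phi> :: "complex \<Rightarrow> complex"
  assumes cov: "covering_space C p X"
    and contf: "continuous_on (ball 0 1 - {0}) f" and fim: "f \<in> ball 0 1 - {0} \<rightarrow> X"
    and \<delta>: "0 < \<delta>" "\<delta> \<le> 1"
    and cont\<phi>: "continuous_on (ball 0 \<delta> - {0}) \<phi>" and \<phi>im: "\<phi> \<in> ball 0 \<delta> - {0} \<rightarrow> C"
    and p\<phi>: "\<And>z. z \<in> ball 0 \<delta> - {0} \<Longrightarrow> p (\<phi> z) = f z"
  obtains G where "continuous_on {z. Re z < 0} G" "G \<in> {z. Re z < 0} \<rightarrow> C"
    "\<And>\<zeta>. Re \<zeta> < 0 \<Longrightarrow> p (G \<zeta>) = f (exp \<zeta>)" "\<And>\<zeta>. Re \<zeta> < ln \<delta> \<Longrightarrow> G \<zeta> = \<phi> (exp \<zeta>)"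
proof -
  define H where "H = exp -` (ball (0::complex) 1 - {0})"
  define H\<delta> where "H\<delta> = exp -` (ball (0::complex) \<delta> - {0})"
  have H: "H = {z. Re z < 0}" and H\<delta>: "H\<delta> = {z. Re z < ln \<delta>}"
    using vimage_exp_punctured_ball[of 1] vimage_exp_punctured_ball[OF \<delta>(1)] by (simp_all add: H_def H\<delta>_def)
  have H\<delta>_sub: "H\<delta> \<subseteq> H"
  proof -
    have "ln \<delta> \<le> 0" using \<delta> by simp
    then show ?thesis unfolding H H\<delta> by auto
  qed
  have contfe: "continuous_on H (f \<circ> exp)"
    unfolding H_def by (intro continuous_on_compose continuous_intros continuous_on_subset[OF contf]) auto
  have feim: "f \<circ> exp \<in> H \<rightarrow> X" using fim by (auto simp: H_def)
  define \<zeta>0 where "\<zeta>0 = complex_of_real (ln \<delta> - 1)"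
  have \<zeta>0: "\<zeta>0 \<in> H\<delta>" by (simp add: H\<delta> \<zeta>0_def)
  then have \<zeta>0_H: "\<zeta>0 \<in> H" using H\<delta>_sub by blast
  obtain G where contG: "continuous_on H G" and Gim: "G \<in> H \<rightarrow> C" and G0: "G \<zeta>0 = \<phi> (exp \<zeta>0)"
    and pG: "\<And>\<zeta>. \<zeta> \<in> H \<Longrightarrow> p (G \<zeta>) = f (exp \<zeta>)"
  proof (rule covering_space_lift_strong[OF cov _ \<zeta>0_H _ _ contfe feim])
    show "\<phi> (exp \<zeta>0) \<in> C" using \<phi>im \<zeta>0 by (auto simp: H\<delta>_def)
    show "simply_connected H" unfolding H by (intro convex_imp_simply_connected convex_halfspace_Re_lt)
    show "locally path_connected H" unfolding H by (intro open_imp_locally_path_connected open_halfspace_Re_lt)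
    show "(f \<circ> exp) \<zeta>0 = p (\<phi> (exp \<zeta>0))" using p\<phi> \<zeta>0 by (simp add: H\<delta>_def)
  qed auto
  have G\<phi>: "G \<zeta> = \<phi> (exp \<zeta>)" if "\<zeta> \<in> H\<delta>" for \<zeta>
  proof (rule covering_space_lift_unique[OF cov, of G \<zeta>0 "\<lambda>\<zeta>. \<phi> (exp \<zeta>)" H\<delta> "f \<circ> exp"])
    show "continuous_on H\<delta> (f \<circ> exp)" "continuous_on H\<delta> G"
      using contfe contG H\<delta>_sub by (auto intro: continuous_on_subset)
    show "f \<circ> exp \<in> H\<delta> \<rightarrow> X" "G \<in> H\<delta> \<rightarrow> C" "\<And>\<zeta>. \<zeta> \<in> H\<delta> \<Longrightarrow> (f \<circ> exp) \<zeta> = p (G \<zeta>)"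
      using feim Gim pG H\<delta>_sub by auto
    show "continuous_on H\<delta> (\<lambda>\<zeta>. \<phi> (exp \<zeta>))"
      unfolding H\<delta>_def by (intro continuous_on_compose2[OF cont\<phi>] continuous_intros) auto
    show "(\<lambda>\<zeta>. \<phi> (exp \<zeta>)) \<in> H\<delta> \<rightarrow> C" "\<And>\<zeta>. \<zeta> \<in> H\<delta> \<Longrightarrow> (f \<circ> exp) \<zeta> = p (\<phi> (exp \<zeta>))"
      using \<phi>im p\<phi> by (auto simp: H\<delta>_def)
    show "connected H\<delta>" unfolding H\<delta> by (intro convex_connected convex_halfspace_Re_lt)
  qed (use G0 \<zeta>0 that in auto)
  show ?thesis
  proof (rule that)
    show "continuous_on {z. Re z < 0} G" "G \<in> {z. Re z < 0} \<rightarrow> C" using contG Gim by (simp_all add: H)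
    show "p (G \<zeta>) = f (exp \<zeta>)" if "Re \<zeta> < 0" for \<zeta> using pG that by (simp add: H)
    show "G \<zeta> = \<phi> (exp \<zeta>)" if "Re \<zeta> < ln \<delta>" for \<zeta> using G\<phi> that by (simp add: H\<delta>)
  qed
qed

lemma covering_space_lift_exp_invariant:
  fixes p f G \<phi> :: "complex \<Rightarrow> complex"
  assumes cov: "covering_space C p X"
    and contf: "continuous_on (ball 0 1 - {0}) f" and fim: "f \<in> ball 0 1 - {0} \<rightarrow> X"
    and contG: "continuous_on {z. Re z < 0} G" and Gim: "G \<in> {z. Re z < 0} \<rightarrow> C"
    and pG: "\<And>\<zeta>. Re \<zeta> < 0 \<Longrightarrow> p (G \<zeta>) = f (exp \<zeta>)"
    and G\<phi>: "\<And>\<zeta>. Re \<zeta> < c \<Longrightarrow> G \<zeta> = \<phi> (exp \<zeta>)"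
    and uv: "Re u < 0" "Re v < 0" "exp u = exp v"
  shows "G u = G v"
proof -
  \<comment> \<open>Both \<open>G\<close> and its translate by a period of \<open>exp\<close> lift \<open>f \<circ> exp\<close>, and they agree far to the left.\<close>
  define H where "H = {z::complex. Re z < 0}"
  obtain n :: int where u: "u = v + of_int (2 * n) * pi * \<i>" using uv(3) exp_eq by blast
  define T where "T = of_int (2 * n) * pi * \<i>"
  have exp_shift: "exp (\<zeta> + T) = exp \<zeta>" for \<zeta>
    unfolding exp_eq T_def by blast
  have shift: "\<zeta> + T \<in> H" if "\<zeta> \<in> H" for \<zeta>
    using that by (simp add: H_def T_def)
  have contfe: "continuous_on H (f \<circ> exp)"
    unfolding H_def using vimage_exp_punctured_ball[of 1]
    by (intro continuous_on_compose continuous_intros continuous_on_subset[OF contf]) auto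
  have feim: "f \<circ> exp \<in> H \<rightarrow> X"
    using fim vimage_exp_punctured_ball[of 1] by (auto simp: H_def)
  define \<zeta>0 where "\<zeta>0 = complex_of_real (min c 0 - 1)"
  have \<zeta>0: "\<zeta>0 \<in> H" "Re \<zeta>0 < c" "Re (\<zeta>0 + T) < c" by (simp_all add: H_def \<zeta>0_def T_def)
  have "G (\<zeta>0 + T) = G \<zeta>0" using G\<phi> \<zeta>0(2,3) exp_shift by simp
  then have "G (v + T) = G v"
  proof (rule covering_space_lift_unique[OF cov, of "\<lambda>\<zeta>. G (\<zeta> + T)" \<zeta>0 G H "f \<circ> exp"])
    show "continuous_on H (\<lambda>\<zeta>. G (\<zeta> + T))"
      by (intro continuous_on_compose2[OF contG] continuous_intros) (use shift in \<open>auto simp: H_def\<close>)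
    show "(\<lambda>\<zeta>. G (\<zeta> + T)) \<in> H \<rightarrow> C" using Gim shift by (auto simp: H_def)
    show "(f \<circ> exp) \<zeta> = p (G (\<zeta> + T))" if "\<zeta> \<in> H" for \<zeta>
      using pG shift[OF that] exp_shift by (simp add: H_def)
    show "(f \<circ> exp) \<zeta> = p (G \<zeta>)" if "\<zeta> \<in> H" for \<zeta>
      using pG that by (simp add: H_def)
    show "connected H" unfolding H_def by (intro convex_connected convex_halfspace_Re_lt)
    show "continuous_on H G" "G \<in> H \<rightarrow> C" using contG Gim by (simp_all add: H_def)
  qed (use contfe feim \<zeta>0 uv in \<open>simp_all add: H_def\<close>)
  then show ?thesis using u by (simp add: T_def)
qed

lemma covering_space_lift_punctured_disc:
  fixes p f \<phi> :: "complex \<Rightarrow> complex"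
  assumes cov: "covering_space C p X"
    and contf: "continuous_on (ball 0 1 - {0}) f" and fim: "f \<in> ball 0 1 - {0} \<rightarrow> X"
    and \<delta>: "0 < \<delta>" "\<delta> \<le> 1"
    and cont\<phi>: "continuous_on (ball 0 \<delta> - {0}) \<phi>" and \<phi>im: "\<phi> \<in> ball 0 \<delta> - {0} \<rightarrow> C"
    and p\<phi>: "\<And>z. z \<in> ball 0 \<delta> - {0} \<Longrightarrow> p (\<phi> z) = f z"
  obtains F where "continuous_on (ball 0 1 - {0}) F" "F \<in> ball 0 1 - {0} \<rightarrow> C"
    "\<And>z. z \<in> ball 0 1 - {0} \<Longrightarrow> p (F z) = f z"
    "\<And>z. z \<in> ball 0 \<delta> - {0} \<Longrightarrow> F z = \<phi> z"
proof -
  \<comment> \<open>The lift of \<open>f \<circ> exp\<close> that extends \<open>\<phi> \<circ> exp\<close> is constant on the fibres of \<open>exp\<close>,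
      so it descends to the punctured disc.\<close>
  obtain G where contG: "continuous_on {z. Re z < 0} G" and Gim: "G \<in> {z. Re z < 0} \<rightarrow> C"
    and pG: "\<And>\<zeta>. Re \<zeta> < 0 \<Longrightarrow> p (G \<zeta>) = f (exp \<zeta>)" and G\<phi>: "\<And>\<zeta>. Re \<zeta> < ln \<delta> \<Longrightarrow> G \<zeta> = \<phi> (exp \<zeta>)"
    using covering_space_lift_exp_left_halfplane[OF assms] by blast
  have H: "exp -` (ball 0 1 - {0}) = {z. Re z < 0}"
    using vimage_exp_punctured_ball[of 1] by simp
  have Ln_H: "Re (Ln z) < 0" if "z \<in> ball 0 1 - {0}" for z
  proof -
    have "Ln z \<in> exp -` (ball 0 1 - {0})" using that by simp
    then show ?thesis unfolding H by simp
  qed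
  have Ln_H\<delta>: "Re (Ln z) < ln \<delta>" if "z \<in> ball 0 \<delta> - {0}" for z
  proof -
    have "Ln z \<in> exp -` (ball 0 \<delta> - {0})" using that by simp
    then show ?thesis unfolding vimage_exp_punctured_ball[OF \<delta>(1)] by simp
  qed
  show ?thesis
  proof (rule that[of "\<lambda>z. G (Ln z)"])
    show "continuous_on (ball 0 1 - {0}) (\<lambda>z. G (Ln z))"
    proof (rule continuous_on_comp_Ln_if_exp_invariant)
      show "continuous_on (exp -` (ball 0 1 - {0})) G" using contG by (simp add: H)
      show "G u = G v" if "u \<in> exp -` (ball 0 1 - {0})" "v \<in> exp -` (ball 0 1 - {0})" "exp u = exp v" for u v
        using covering_space_lift_exp_invariant[OF cov contf fim contG Gim pG G\<phi>] that unfolding H by blast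
    qed auto
    show "(\<lambda>z. G (Ln z)) \<in> ball 0 1 - {0} \<rightarrow> C" using Gim Ln_H by (simp add: Pi_iff)
    show "p (G (Ln z)) = f z" if "z \<in> ball 0 1 - {0}" for z
      using pG[OF Ln_H[OF that]] that by simp
    show "G (Ln z) = \<phi> z" if "z \<in> ball 0 \<delta> - {0}" for z
      using G\<phi>[OF Ln_H\<delta>[OF that]] that by simp
  qed
qed

lemma covering_lift_punctured_disc_tendsto:
  fixes g :: "complex \<Rightarrow> complex"
  assumes Y1: "open Y1" "a \<in> Y1" and holg: "g holomorphic_on Y1" and ga: "g a = b"
    and dga: "deriv g a \<noteq> 0" and cov: "covering_space (Y1 - {a}) g (Y2 - {b})"
    and k: "k \<in> hurwitz_maps (ball 0 1) Y2 0 b"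
  obtains F where "F holomorphic_on ball 0 1 - {0}" "F \<in> ball 0 1 - {0} \<rightarrow> Y1 - {a}"
    "\<And>z. z \<in> ball 0 1 - {0} \<Longrightarrow> g (F z) = k z" "(F \<longlongrightarrow> a) (at 0)"
proof -
  from k have holk: "k holomorphic_on ball 0 1" and kim: "k ` ball 0 1 \<subseteq> Y2"
    and k0: "k 0 = b" and kne: "\<And>z. z \<in> ball 0 1 \<Longrightarrow> z \<noteq> 0 \<Longrightarrow> k z \<noteq> b"
    by (auto simp: hurwitz_maps_def)
  obtain V \<psi> where V: "open V" "b \<in> V" and hol\<psi>: "\<psi> holomorphic_on V" and \<psi>b: "\<psi> b = a"
    and \<psi>V: "\<And>y. y \<in> V \<Longrightarrow> \<psi> y \<in> Y1 \<and> g (\<psi> y) = y"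
    using holomorphic_local_inverse[OF holg Y1(2,1) dga] ga by metis
  \<comment> \<open>Near \<open>0\<close> the local inverse \<open>\<psi>\<close> of \<open>g\<close> already lifts \<open>k\<close>.\<close>
  obtain \<delta> where \<delta>: "0 < \<delta>" "\<delta> \<le> 1" "k ` ball 0 \<delta> \<subseteq> V"
  proof -
    have "continuous_on (ball 0 1) k" using holk holomorphic_on_imp_continuous_on by blast
    then have "open (ball 0 1 \<inter> k -` V)"
      using V(1) by (simp add: continuous_on_open_vimage Int_commute)
    then obtain \<epsilon> where "\<epsilon> > 0" "ball 0 \<epsilon> \<subseteq> ball 0 1 \<inter> k -` V"
      using k0 V(2) by (force simp: open_contains_ball)
    then show ?thesis
      by (intro that[of "min \<epsilon> 1"]) force+
  qed
  have k\<delta>: "k z \<in> V" if "z \<in> ball 0 \<delta>" for z using \<delta>(3) that by blast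
  have ball\<delta>: "ball 0 \<delta> \<subseteq> ball 0 1" using \<delta>(2) by auto
  have hol\<psi>k: "(\<lambda>z. \<psi> (k z)) holomorphic_on ball 0 \<delta>"
    using k\<delta> by (intro holomorphic_on_compose_gen[OF holomorphic_on_subset[OF holk ball\<delta>] hol\<psi>, unfolded o_def]) auto
  have \<psi>k: "\<psi> (k z) \<in> Y1 - {a} \<and> g (\<psi> (k z)) = k z" if "z \<in> ball 0 \<delta> - {0}" for z
  proof -
    have "k z \<noteq> b" using kne that ball\<delta> by blast
    then show ?thesis using \<psi>V[OF k\<delta>] ga that by force
  qed
  have contk: "continuous_on (ball 0 1 - {0}) k"
    using holk by (meson Diff_subset holomorphic_on_imp_continuous_on holomorphic_on_subset)
  have kim': "k \<in> ball 0 1 - {0} \<rightarrow> Y2 - {b}" using kim kne by (intro Pi_I) blast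
  obtain F where contF: "continuous_on (ball 0 1 - {0}) F" and Fim: "F \<in> ball 0 1 - {0} \<rightarrow> Y1 - {a}"
    and gF: "\<And>z. z \<in> ball 0 1 - {0} \<Longrightarrow> g (F z) = k z"
    and F\<psi>: "\<And>z. z \<in> ball 0 \<delta> - {0} \<Longrightarrow> F z = \<psi> (k z)"
  proof (rule covering_space_lift_punctured_disc[OF cov contk kim' \<delta>(1,2)])
    show "continuous_on (ball 0 \<delta> - {0}) (\<lambda>z. \<psi> (k z))"
      using hol\<psi>k by (meson Diff_subset holomorphic_on_imp_continuous_on holomorphic_on_subset)
  qed (use \<psi>k in auto)
  show ?thesis
  proof (rule that[OF _ Fim gF])
    show "F holomorphic_on ball 0 1 - {0}"
    proof (rule covering_space_lift_is_holomorphic[OF cov _ _ _ kim' Fim contF gF])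
      show "open (Y1 - {a})" using Y1(1) by blast
      show "g holomorphic_on Y1 - {a}" using holg by (rule holomorphic_on_subset) blast
      show "k holomorphic_on ball 0 1 - {0}" using holk by (rule holomorphic_on_subset) blast
    qed
    have "isCont (\<lambda>z. \<psi> (k z)) 0"
      using holomorphic_on_imp_continuous_on[OF hol\<psi>k] \<delta>(1) by (simp add: continuous_on_eq_continuous_at)
    then have "((\<lambda>z. \<psi> (k z)) \<longlongrightarrow> a) (at 0)"
      using \<psi>b k0 by (simp add: isCont_def)
    moreover have "\<forall>\<^sub>F z in at 0. \<psi> (k z) = F z"
      using \<delta>(1) F\<psi> by (auto simp: eventually_at dist_norm intro!: exI[of _ \<delta>])
    ultimately show "(F \<longlongrightarrow> a) (at 0)"
      by (rule Lim_transform_eventually)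
  qed
qed

lemma hurwitz_maps_lift:
  fixes g :: "complex \<Rightarrow> complex"
  assumes Y1: "open Y1" "a \<in> Y1" and holg: "g holomorphic_on Y1" and ga: "g a = b"
    and dga: "deriv g a \<noteq> 0" and cov: "covering_space (Y1 - {a}) g (Y2 - {b})"
    and k: "k \<in> hurwitz_maps (ball 0 1) Y2 0 b"
  obtains h where "h \<in> hurwitz_maps (ball 0 1) Y1 0 a" "\<And>z. z \<in> ball 0 1 \<Longrightarrow> g (h z) = k z"
proof -
  obtain F where holF: "F holomorphic_on ball 0 1 - {0}" and Fim: "F \<in> ball 0 1 - {0} \<rightarrow> Y1 - {a}"
    and gF: "\<And>z. z \<in> ball 0 1 - {0} \<Longrightarrow> g (F z) = k z" and F0: "(F \<longlongrightarrow> a) (at 0)"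
    using covering_lift_punctured_disc_tendsto[OF assms] by blast
  define h where "h z = (if z = 0 then a else F z)" for z
  have "h holomorphic_on ball 0 1"
  proof (rule no_isolated_singularity'[where K = "{0}"])
    have "(h \<longlongrightarrow> a) (at 0)"
      using F0 by (rule Lim_transform_eventually) (simp add: eventually_at_filter h_def)
    then show "(h \<longlongrightarrow> h z) (at z within ball 0 1)" if "z \<in> {0}" for z
      using that tendsto_within_subset[OF _ subset_UNIV] by (simp add: h_def)
    show "h holomorphic_on ball 0 1 - {0}"
      using holF by (rule holomorphic_transform) (simp add: h_def)
  qed auto
  moreover have "h z \<in> Y1 - {a}" if "z \<in> ball 0 1 - {0}" for z
    using Fim that by (auto simp: h_def)
  ultimately have "h \<in> hurwitz_maps (ball 0 1) Y1 0 a"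
    using Y1(2) unfolding hurwitz_maps_def by (auto simp: h_def)
  moreover have "g (h z) = k z" if "z \<in> ball 0 1" for z
    using gF that ga k hurwitz_maps_def by (auto simp: h_def)
  ultimately show ?thesis using that by blast
qed

lemma hurwitz_derivs_covering:
  fixes g :: "complex \<Rightarrow> complex"
  assumes Y1: "open Y1" "a \<in> Y1" and holg: "g holomorphic_on Y1" and ga: "g a = b"
    and dga: "deriv g a \<noteq> 0" and cov: "covering_space (Y1 - {a}) g (Y2 - {b})"
    and x: "x \<in> hurwitz_derivs Y2 b"
  shows "x / norm (deriv g a) \<in> hurwitz_derivs Y1 a"
proof -
  obtain k where k: "k \<in> hurwitz_maps (ball 0 1) Y2 0 b" and dk: "deriv k 0 = of_real x" and "x > 0"
    using x by (rule hurwitz_derivsE)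
  obtain h where h: "h \<in> hurwitz_maps (ball 0 1) Y1 0 a" and gh: "\<And>z. z \<in> ball 0 1 \<Longrightarrow> g (h z) = k z"
    using hurwitz_maps_lift[OF Y1 holg ga dga cov k] by blast
  from h have holh: "h holomorphic_on ball 0 1" and him: "h ` ball 0 1 \<subseteq> Y1" and h0: "h 0 = a"
    by (auto simp: hurwitz_maps_def)
  have "deriv k 0 = deriv (\<lambda>z. g (h z)) 0"
    using gh by (intro deriv_cong_ev) (auto simp: eventually_nhds intro!: exI[of _ "ball 0 1"])
  also have "\<dots> = deriv g a * deriv h 0"
    using deriv_chain[of h 0 g, unfolded o_def] holh holg him h0 Y1(1)
    by (metis centre_in_ball holomorphic_on_imp_differentiable_at image_subset_iff open_ball zero_less_one)
  finally have dkh: "of_real x = deriv g a * deriv h 0" using dk by simp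
  define u where "u = deriv g a / norm (deriv g a)"
  have u: "norm u = 1" using dga by (simp add: u_def norm_divide)
  have "(\<lambda>z. h (u * z)) \<in> hurwitz_maps (ball 0 1) Y1 0 a"
    and "deriv (\<lambda>z. h (u * z)) 0 = of_real (x / norm (deriv g a))"
    using hurwitz_maps_rotate[OF h u] dkh dga by (simp_all add: u_def field_simps)
  then show ?thesis
    using \<open>x > 0\<close> dga by (intro hurwitz_derivsI) auto
qed

lemma hurwitz_radius_le_covering:
  fixes g :: "complex \<Rightarrow> complex"
  assumes Y1: "open Y1" "Y1 \<noteq> UNIV" "a \<in> Y1" and Y2: "open Y2" "b \<in> Y2"
    and holg: "g holomorphic_on Y1" and ga: "g a = b"
    and dga: "deriv g a \<noteq> 0" and cov: "covering_space (Y1 - {a}) g (Y2 - {b})"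
  shows "hurwitz_radius Y2 b \<le> norm (deriv g a) * hurwitz_radius Y1 a"
proof -
  have "x \<le> norm (deriv g a) * Sup (hurwitz_derivs Y1 a)" if "x \<in> hurwitz_derivs Y2 b" for x
  proof -
    have "x / norm (deriv g a) \<le> Sup (hurwitz_derivs Y1 a)"
      using hurwitz_derivs_covering[OF Y1(1,3) holg ga dga cov that]
      by (rule cSup_upper[OF _ bdd_above_hurwitz_derivs[OF Y1(2)]])
    then show ?thesis using dga by (simp add: field_simps)
  qed
  moreover have "hurwitz_derivs Y2 b \<noteq> {}"
    using hurwitz_derivs_ex_pos[OF Y2] by blast
  ultimately show ?thesis
    unfolding hurwitz_radius_eq_Sup by (intro cSup_least)
qed

lemma hurwitz_density_le_covering:
  fixes g :: "complex \<Rightarrow> complex"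
  assumes Y1: "open Y1" "Y1 \<noteq> UNIV" "a \<in> Y1" and Y2: "open Y2" "Y2 \<noteq> UNIV" "b \<in> Y2"
    and holg: "g holomorphic_on Y1" and ga: "g a = b"
    and dga: "deriv g a \<noteq> 0" and cov: "covering_space (Y1 - {a}) g (Y2 - {b})"
  shows "hurwitz_density Y1 a \<le> norm (deriv g a) * hurwitz_density Y2 b"
proof -
  have "0 < hurwitz_radius Y1 a" "0 < hurwitz_radius Y2 b"
    using hurwitz_radius_pos Y1 Y2 by auto
  with hurwitz_radius_le_covering[OF Y1 Y2(1,3) holg ga dga cov]
  show ?thesis by (simp add: hurwitz_density_def field_simps)
qed

lemma hurwitz_maps_comp:
  assumes h: "h \<in> hurwitz_maps \<Omega> Y1 w a" and g: "g \<in> hurwitz_maps Y1 Y2 a b"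
  shows "g \<circ> h \<in> hurwitz_maps \<Omega> Y2 w b"
proof -
  from h have holh: "h holomorphic_on \<Omega>" and him: "h ` \<Omega> \<subseteq> Y1" and hw: "h w = a"
    and hne: "\<forall>z\<in>\<Omega> - {w}. h z \<noteq> a"
    by (auto simp: hurwitz_maps_def)
  from g have holg: "g holomorphic_on Y1" and gim: "g ` Y1 \<subseteq> Y2" and ga: "g a = b"
    and gne: "\<forall>y\<in>Y1 - {a}. g y \<noteq> b"
    by (auto simp: hurwitz_maps_def)
  show ?thesis
    unfolding hurwitz_maps_def
    using holomorphic_on_compose_gen[OF holh holg him] him gim hw ga hne gne by auto
qed

lemma cara_hurwitz_nonneg:
  assumes "0 \<le> hurwitz_density Y s"
  shows "0 \<le> cara_hurwitz \<Omega> Y s w"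
proof (cases "hurwitz_maps \<Omega> Y w s = {}")
  case False
  then obtain h where h: "h \<in> hurwitz_maps \<Omega> Y w s" by blast
  then have "ereal 0 \<le> ereal (hurwitz_density Y (h w) * norm (deriv h w))"
    using assms by (simp add: hurwitz_maps_def)
  also have "\<dots> \<le> (SUP h\<in>hurwitz_maps \<Omega> Y w s. ereal (hurwitz_density Y (h w) * norm (deriv h w)))"
    using h by (rule SUP_upper)
  finally show ?thesis using False by (simp add: cara_hurwitz_def zero_ereal_def)
qed (simp add: cara_hurwitz_def)

lemma cara_hurwitz_le_postcomp:
  fixes g :: "complex \<Rightarrow> complex"
  assumes \<Omega>: "open \<Omega>" "w \<in> \<Omega>" and "open Y1" and g: "g \<in> hurwitz_maps Y1 Y2 a b"
    and dens: "hurwitz_density Y1 a \<le> norm (deriv g a) * hurwitz_density Y2 b"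
    and dens_nonneg: "0 \<le> hurwitz_density Y2 b"
  shows "cara_hurwitz \<Omega> Y1 a w \<le> cara_hurwitz \<Omega> Y2 b w"
proof (cases "hurwitz_maps \<Omega> Y1 w a = {}")
  case True
  then show ?thesis using cara_hurwitz_nonneg[OF dens_nonneg] by (simp add: cara_hurwitz_def)
next
  case False
  let ?d = "\<lambda>Y h. ereal (hurwitz_density Y (h w) * norm (deriv h w))"
  have "?d Y1 h \<le> (SUP k\<in>hurwitz_maps \<Omega> Y2 w b. ?d Y2 k)" if h: "h \<in> hurwitz_maps \<Omega> Y1 w a" for h
  proof -
    from h have holh: "h holomorphic_on \<Omega>" and him: "h ` \<Omega> \<subseteq> Y1" and hw: "h w = a"
      by (auto simp: hurwitz_maps_def)
    from g have holg: "g holomorphic_on Y1" and ga: "g a = b"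
      by (auto simp: hurwitz_maps_def)
    have gh: "g \<circ> h \<in> hurwitz_maps \<Omega> Y2 w b"
      using hurwitz_maps_comp[OF h g] .
    have "deriv (g \<circ> h) w = deriv g a * deriv h w"
      using deriv_chain[of h w g] holh holg him hw \<Omega> \<open>open Y1\<close>
      by (metis holomorphic_on_imp_differentiable_at image_subset_iff)
    then have "hurwitz_density Y1 (h w) * norm (deriv h w)
             \<le> hurwitz_density Y2 ((g \<circ> h) w) * norm (deriv (g \<circ> h) w)"
      using mult_right_mono[OF dens, of "norm (deriv h w)"] hw ga by (simp add: norm_mult mult_ac)
    also have "ereal \<dots> \<le> (SUP k\<in>hurwitz_maps \<Omega> Y2 w b. ?d Y2 k)"
      using gh by (rule SUP_upper)
    finally show ?thesis by simp
  qed
  moreover have "hurwitz_maps \<Omega> Y2 w b \<noteq> {}"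
    using False hurwitz_maps_comp[OF _ g] by blast
  ultimately show ?thesis
    using False by (simp add: cara_hurwitz_def SUP_least)
qed

theorem theorem3p14:
  fixes Y1 Y2 \<Omega> :: "complex set"
  assumes "domain Y1" "Y1 \<noteq> UNIV" "domain Y2" "Y2 \<noteq> UNIV" "domain \<Omega>"
    and "\<forall>b\<in>Y2. \<exists>a\<in>Y1. \<exists>g. g holomorphic_on Y1 \<and> g ` Y1 \<subseteq> Y2 \<and> g a = b \<and> deriv g a \<noteq> 0
                     \<and> covering_space (Y1 - {a}) g (Y2 - {b})"
  shows "\<forall>b\<in>Y2. \<forall>a\<in>Y1.
           (\<exists>g. g holomorphic_on Y1 \<and> g ` Y1 \<subseteq> Y2 \<and> g a = b \<and> deriv g a \<noteq> 0
                 \<and> covering_space (Y1 - {a}) g (Y2 - {b}))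
           \<longrightarrow> (\<forall>w\<in>\<Omega>. cara_hurwitz \<Omega> Y1 a w \<le> cara_hurwitz \<Omega> Y2 b w)"
proof (intro ballI impI)
  fix b a w
  assume "b \<in> Y2" "a \<in> Y1" "w \<in> \<Omega>"
    and "\<exists>g. g holomorphic_on Y1 \<and> g ` Y1 \<subseteq> Y2 \<and> g a = b \<and> deriv g a \<noteq> 0
             \<and> covering_space (Y1 - {a}) g (Y2 - {b})"
  then obtain g where holg: "g holomorphic_on Y1" and gim: "g ` Y1 \<subseteq> Y2" and ga: "g a = b"
    and dga: "deriv g a \<noteq> 0" and cov: "covering_space (Y1 - {a}) g (Y2 - {b})"
    by blast
  have "open Y1" "open Y2" "open \<Omega>"
    using assms(1,3,5) by (auto simp: domain_def)
  have dens: "hurwitz_density Y1 a \<le> norm (deriv g a) * hurwitz_density Y2 b"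
    using hurwitz_density_le_covering \<open>open Y1\<close> \<open>open Y2\<close> assms(2,4) \<open>a \<in> Y1\<close> \<open>b \<in> Y2\<close>
      holg ga dga cov by blast
  have "0 \<le> hurwitz_density Y2 b"
    using hurwitz_radius_pos[OF \<open>open Y2\<close> assms(4) \<open>b \<in> Y2\<close>] by (simp add: hurwitz_density_def)
  moreover have "g \<in> hurwitz_maps Y1 Y2 a b"
    using covering_space_imp_surjective[OF cov] holg gim ga by (auto simp: hurwitz_maps_def)
  ultimately show "cara_hurwitz \<Omega> Y1 a w \<le> cara_hurwitz \<Omega> Y2 b w"
    using cara_hurwitz_le_postcomp[OF \<open>open \<Omega>\<close> \<open>w \<in> \<Omega>\<close> \<open>open Y1\<close> _ dens] by blast
qed

end
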